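(* Let $m\geq2$, $q$ a power of the prime $p$, $\mathcal{S}\leq\mathrm{U}_{2m+1}(\mathbb{F}_q)$ the Sylow $p$-subgroup of lower unitriangular matrices, $\mathcal{A}=\{X_{\mathbbm{1},P,\alpha}\}$ and $\mathcal{A}_0=\{X_{\mathbbm{1},P,0}\}$. Then $C_{\mathcal{S}}(\mathcal{A})\leq\mathcal{A}_0$.
   Context: $\overline{x}=x^q$ on $\mathbb{F}_{q^2}$, applied entrywise. $Q_k$ is the $k\times k$ matrix with $1$ on the skew-diagonal and $0$ elsewhere; $\mathrm{U}_{2m+1}(\mathbb{F}_q)=\{A\in\mathrm{GL}_{2m+1}(\mathbb{F}_{q^2}):\overline{A}^TQ_{2m+1}A=Q_{2m+1}\}$. $B^F=Q_mB^TQ_m$. $P$ is conjugate-skew-persymmetric if $\overline{P}^F=-P$; for a $1\times m$ vector $\alpha$, $P$ is $\alpha$-conjugate-skew-persymmetric if $P+\overline{P}^F=-Q_m\overline{\alpha}^T\alpha$. The elements of $\mathcal{S}$ are exactly $X_{D,P,\alpha}=\begin{pmatrix}(\overline{D}^F)^{-1}&0&0\\ \alpha&1&0\\ DP&-DQ_m\overline{\alpha}^T&D\end{pmatrix}$ with $D$ lower unitriangular $m\times m$, $\alpha$ a $1\times m$ vector, $P$ $\alpha$-conjugate-skew-persymmetric; $\mathcal{A}$ is the set of those with $D=\mathbbm{1}$ (identity), $\mathcal{A}_0$ those with $D=\mathbbm{1}$ and $\alpha=0$. *)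

theory Defs
  imports "Jordan_Normal_Form.Matrix"
begin

text \<open>Conjugation on F_{q^2}: x bar = x^q, applied entrywise.\<close>
definition cnj :: "nat \<Rightarrow> 'a::field \<Rightarrow> 'a" where
  "cnj q x = x ^ q"

definition cnj_mat :: "nat \<Rightarrow> 'a::field mat \<Rightarrow> 'a mat" where
  "cnj_mat q A = map_mat (cnj q) A"

definition Qmat :: "nat \<Rightarrow> 'a::field mat" where
  "Qmat k = mat k k (\<lambda>(i,j). if i + j = k - 1 then 1 else 0)"

definition flipF :: "nat \<Rightarrow> 'a::field mat \<Rightarrow> 'a mat" where
  "flipF m B = Qmat m * transpose_mat B * Qmat m"

definition unitary_group :: "nat \<Rightarrow> nat \<Rightarrow> 'a::field mat set" where
  "unitary_group q m = {A. A \<in> carrier_mat (2*m+1) (2*m+1) \<and> invertible_mat A \<and>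
      transpose_mat (cnj_mat q A) * Qmat (2*m+1) * A = Qmat (2*m+1)}"

definition lower_unitriangular :: "'a::field mat \<Rightarrow> bool" where
  "lower_unitriangular A \<longleftrightarrow> (\<forall>i<dim_row A. A $$ (i,i) = 1) \<and>
      (\<forall>i<dim_row A. \<forall>j<dim_col A. i < j \<longrightarrow> A $$ (i,j) = 0)"

definition sylowS :: "nat \<Rightarrow> nat \<Rightarrow> 'a::field mat set" where
  "sylowS q m = {A \<in> unitary_group q m. lower_unitriangular A}"

definition alpha_csp :: "nat \<Rightarrow> nat \<Rightarrow> 'a::field mat \<Rightarrow> 'a mat \<Rightarrow> bool" where
  "alpha_csp q m \<alpha> P \<longleftrightarrow>
     P + flipF m (cnj_mat q P) = - (Qmat m * transpose_mat (cnj_mat q \<alpha>) * \<alpha>)"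

text \<open>X_{1,P,alpha}, the block matrix
  [[1,0,0],[alpha,1,0],[P, -Q_m alpha-bar^T, 1]] of size (2m+1).\<close>
definition Xmat :: "nat \<Rightarrow> nat \<Rightarrow> 'a::field mat \<Rightarrow> 'a mat \<Rightarrow> 'a mat" where
  "Xmat q m P \<alpha> = mat (2*m+1) (2*m+1) (\<lambda>(i,j).
     if i < m then (if i = j then 1 else 0)
     else if i = m then (if j < m then \<alpha> $$ (0,j) else if j = m then 1 else 0)
     else (if j < m then P $$ (i - (m+1), j)
           else if j = m then - (Qmat m * transpose_mat (cnj_mat q \<alpha>)) $$ (i - (m+1), 0)
           else if i = j then 1 else 0))"

definition setA :: "nat \<Rightarrow> nat \<Rightarrow> 'a::field mat set" where
  "setA q m = {Xmat q m P \<alpha> | P \<alpha>. P \<in> carrier_mat m m \<and> \<alpha> \<in> carrier_mat 1 m \<and>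
      alpha_csp q m \<alpha> P}"

definition setA0 :: "nat \<Rightarrow> nat \<Rightarrow> 'a::field mat set" where
  "setA0 q m = {Xmat q m P (0\<^sub>m 1 m) | P. P \<in> carrier_mat m m \<and>
      alpha_csp q m (0\<^sub>m 1 m) P}"

definition centralizer :: "'a::field mat set \<Rightarrow> 'a mat set \<Rightarrow> 'a mat set" where
  "centralizer G H = {g \<in> G. \<forall>h\<in>H. g * h = h * g}"

end

(* Choose t \<in> F_{q^2} with t + t^q = -1 (the trace is onto F_q). For each j < m the matrix
   X_j = X_{1, t E_{m-1-j,j}, e_j} lies in A, and X_j - 1 has only three nonzero entries, at
   (m, j), (2m-j, j) and (2m-j, m). Commuting with all X_j kills the off-diagonal entries of
   rows j and m and columns m and 2m-j; together with lower unitriangularity this forces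
   g = X_{1,R,0}. The unitary condition for X_{1,R,0} says precisely R + R-bar^F = 0. *)

theory Submission imports Defs "HOL-Number_Theory.Residues" "HOL-Computational_Algebra.Polynomial"
begin

lemma power_card_UNIV_eq_self:
  fixes x :: "'a::{finite,field}"
  shows "x ^ card (UNIV :: 'a set) = x"
proof (cases "x = 0")
  case False
  have card_pos: "card (UNIV :: 'a set) > 0"
    by (rule finite_UNIV_card_ge_0) simp
  have "x * (\<Prod>y\<in>UNIV-{0}. x * y) = x * x ^ (card (UNIV :: 'a set) - 1) * \<Prod>(UNIV-{0})"
    by (simp add: prod.distrib mult_ac)
  also have "x * x ^ (card (UNIV :: 'a set) - 1) = x ^ card (UNIV :: 'a set)"
    using card_pos by (simp flip: power_Suc)
  also have "(\<Prod>y\<in>UNIV-{0}. x * y) = (\<Prod>y\<in>UNIV-{0}. y)"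
    by (rule prod.reindex_bij_witness[of _ "\<lambda>y. y / x" "\<lambda>y. x * y"]) (use False in auto)
  finally show ?thesis
    by simp
qed (use finite_UNIV_card_ge_0[where ?'a = 'a] in auto)

lemma CHAR_eq_if_card_UNIV_eq_prime_power:
  assumes "prime p" and "card (UNIV :: 'a::{finite,field} set) = p ^ n"
  shows "CHAR('a) = p"
proof -
  have "prime CHAR('a)"
    by (rule prime_CHAR_semidom) (simp add: finite_imp_CHAR_pos)
  moreover from this have "CHAR('a) dvd p"
    using CHAR_dvd_CARD[where 'a = 'a] assms(2) prime_dvd_power by metis
  ultimately show ?thesis
    using assms(1) primes_dvd_imp_eq by blast
qed

text \<open>The trace \<open>t \<mapsto> t + t\<^sup>q\<close> is not identically zero, because \<open>x\<^sup>q + x\<close> has at most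
  \<open>q < q\<^sup>2\<close> roots. A nonzero trace value \<open>y\<close> is fixed by Frobenius, so rescaling by \<open>-1/y\<close>
  gives trace \<open>-1\<close>.\<close>
lemma exists_add_power_eq_minus_one:
  assumes "prime p" and "k \<ge> 1" and "q = p ^ k" and card: "card (UNIV :: 'a::{finite,field} set) = q ^ 2"
  shows "\<exists>t::'a. t + t ^ q = -1"
proof -
  have char: "CHAR('a) = p"
    using assms by (intro CHAR_eq_if_card_UNIV_eq_prime_power) (auto simp: power_mult[symmetric])
  have q_gt_1: "q > 1"
    using assms(1-3) by (metis One_nat_def Suc_le_eq one_less_power prime_gt_1_nat)
  have frob_add: "(x + y) ^ q = x ^ q + y ^ q" for x y :: 'a
    using assms(1) by (intro freshmans_dream') (simp_all add: char assms(3))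
  have frob_minus: "(- x) ^ q = - (x ^ q)" for x :: 'a
    using frob_add[of x "- x"] q_gt_1 by (simp add: power_0_left eq_neg_iff_add_eq_0 add.commute)
  have frob_frob: "(x ^ q) ^ q = x" for x :: 'a
    using power_card_UNIV_eq_self[of x] card by (simp add: power_mult[symmetric] power2_eq_square)
  define f :: "'a poly" where "f = monom 1 q + monom 1 1"
  have deg: "degree f = q"
    unfolding f_def using q_gt_1 by (simp add: degree_add_eq_left degree_monom_eq)
  then have "card {x. poly f x = 0} \<le> q"
    using q_gt_1 card_poly_roots_bound[of f] by fastforce
  also have "q < card (UNIV :: 'a set)"
    using card q_gt_1 by (simp add: power2_eq_square)
  finally obtain t0 where "poly f t0 \<noteq> 0"
    by (metis (mono_tags) UNIV_I mem_Collect_eq order_less_irrefl subsetI subset_antisym)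
  define y where "y = t0 ^ q + t0"
  have y_nonzero: "y \<noteq> 0"
    using \<open>poly f t0 \<noteq> 0\<close> unfolding f_def y_def by (simp add: poly_monom)
  have "y ^ q = y"
    unfolding y_def frob_add frob_frob by simp
  then have "(- t0 / y) + (- t0 / y) ^ q = - y / y"
    unfolding y_def by (simp add: power_divide frob_minus diff_divide_distrib)
  also have "\<dots> = -1"
    using y_nonzero by simp
  finally show ?thesis
    by blast
qed

lemma sum_mult_indicator:
  fixes f :: "nat \<Rightarrow> 'a::comm_ring_1"
  assumes "c < n"
  shows "(\<Sum>k = 0..<n. f k * (if k = c then v else 0)) = f c * v"
proof -
  have "(\<Sum>k = 0..<n. f k * (if k = c then v else 0)) = (\<Sum>k = 0..<n. if k = c then f k * v else 0)"
    by (rule sum.cong) auto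
  also have "\<dots> = f c * v"
    using assms by (simp add: sum.delta)
  finally show ?thesis .
qed

lemma index_Qmat_mult:
  assumes "A \<in> carrier_mat m k" and "r < m" and "c < k"
  shows "(Qmat m * A) $$ (r, c) = A $$ (m - 1 - r, c)"
proof -
  have "(Qmat m * A) $$ (r, c) = (\<Sum>i = 0..<m. A $$ (i, c) * (if i = m - 1 - r then 1 else 0))"
    using assms unfolding Qmat_def by (auto simp: scalar_prod_def intro!: sum.cong)
  also have "\<dots> = A $$ (m - 1 - r, c)"
    using assms by (subst sum_mult_indicator) auto
  finally show ?thesis .
qed

lemma index_mult_Qmat:
  assumes "A \<in> carrier_mat k m" and "r < k" and "c < m"
  shows "(A * Qmat m) $$ (r, c) = A $$ (r, m - 1 - c)"
proof -
  have "(A * Qmat m) $$ (r, c) = (\<Sum>i = 0..<m. A $$ (r, i) * (if i = m - 1 - c then 1 else 0))"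
    using assms unfolding Qmat_def by (auto simp: scalar_prod_def intro!: sum.cong)
  also have "\<dots> = A $$ (r, m - 1 - c)"
    using assms by (subst sum_mult_indicator) auto
  finally show ?thesis .
qed

lemma Qmat_carrier_mat [simp]: "Qmat m \<in> carrier_mat m m"
  by (simp add: Qmat_def)

lemma dim_Qmat [simp]: "dim_row (Qmat m) = m" "dim_col (Qmat m) = m"
  using Qmat_carrier_mat by (blast dest: carrier_matD)+

lemma flipF_carrier_mat [simp]: "flipF m B \<in> carrier_mat m m"
  unfolding flipF_def by (rule carrier_matI) simp_all

lemma dim_flipF [simp]: "dim_row (flipF m B) = m" "dim_col (flipF m B) = m"
  using flipF_carrier_mat by (blast dest: carrier_matD)+

lemma index_flipF:
  assumes "B \<in> carrier_mat m m" and "r < m" and "c < m"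
  shows "flipF m B $$ (r, c) = B $$ (m - 1 - c, m - 1 - r)"
proof -
  have BT: "transpose_mat B \<in> carrier_mat m m"
    using assms(1) by simp
  then have "Qmat m * transpose_mat B \<in> carrier_mat m m"
    by (rule mult_carrier_mat[OF Qmat_carrier_mat])
  then have "flipF m B $$ (r, c) = (Qmat m * transpose_mat B) $$ (r, m - 1 - c)"
    unfolding flipF_def using assms(2,3) by (rule index_mult_Qmat)
  also have "\<dots> = transpose_mat B $$ (m - 1 - r, m - 1 - c)"
    using BT assms(2,3) by (intro index_Qmat_mult) auto
  also have "\<dots> = B $$ (m - 1 - c, m - 1 - r)"
    using assms by simp
  finally show ?thesis .
qed

lemma dim_row_cnj_mat [simp]: "dim_row (cnj_mat q A) = dim_row A"
  by (simp add: cnj_mat_def)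

lemma dim_col_cnj_mat [simp]: "dim_col (cnj_mat q A) = dim_col A"
  by (simp add: cnj_mat_def)

lemma index_cnj_mat [simp]:
  "i < dim_row A \<Longrightarrow> j < dim_col A \<Longrightarrow> cnj_mat q A $$ (i, j) = cnj q (A $$ (i, j))"
  by (simp add: cnj_mat_def)

lemma eq_carrier_mat_iff:
  assumes "A \<in> carrier_mat n k" and "B \<in> carrier_mat n k"
  shows "A = B \<longleftrightarrow> (\<forall>i<n. \<forall>j<k. A $$ (i, j) = B $$ (i, j))"
  using assms by (auto intro!: eq_matI)

lemma alpha_csp_iff:
  assumes P: "P \<in> carrier_mat m m" and \<alpha>: "\<alpha> \<in> carrier_mat 1 m"
  shows "alpha_csp q m \<alpha> P \<longleftrightarrow> (\<forall>r<m. \<forall>c<m.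
           P $$ (r, c) + cnj q (P $$ (m - 1 - c, m - 1 - r)) = - (cnj q (\<alpha> $$ (0, m - 1 - r)) * \<alpha> $$ (0, c)))"
    (is "_ \<longleftrightarrow> ?rhs")
proof -
  define Q\<alpha> where "Q\<alpha> = Qmat m * transpose_mat (cnj_mat q \<alpha>)"
  have cnjP: "cnj_mat q P \<in> carrier_mat m m"
    using carrier_matD[OF P] by (intro carrier_matI) simp_all
  have cnj\<alpha>T: "transpose_mat (cnj_mat q \<alpha>) \<in> carrier_mat m 1"
    using carrier_matD[OF \<alpha>] by (intro carrier_matI) simp_all
  have Q\<alpha>_carrier: "Q\<alpha> \<in> carrier_mat m 1"
    unfolding Q\<alpha>_def using Qmat_carrier_mat cnj\<alpha>T by (rule mult_carrier_mat)
  have lhs: "(P + flipF m (cnj_mat q P)) $$ (r, c) = P $$ (r, c) + cnj q (P $$ (m - 1 - c, m - 1 - r))"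
    if "r < m" "c < m" for r c
  proof -
    have "(P + flipF m (cnj_mat q P)) $$ (r, c) = P $$ (r, c) + flipF m (cnj_mat q P) $$ (r, c)"
      using that by (intro index_add_mat(1)) simp_all
    also have "flipF m (cnj_mat q P) $$ (r, c) = cnj_mat q P $$ (m - 1 - c, m - 1 - r)"
      using cnjP that by (rule index_flipF)
    also have "\<dots> = cnj q (P $$ (m - 1 - c, m - 1 - r))"
      using P that by simp
    finally show ?thesis .
  qed
  have rhs: "(- (Q\<alpha> * \<alpha>)) $$ (r, c) = - (cnj q (\<alpha> $$ (0, m - 1 - r)) * \<alpha> $$ (0, c))"
    if "r < m" "c < m" for r c
  proof -
    have "(Q\<alpha> * \<alpha>) $$ (r, c) = Q\<alpha> $$ (r, 0) * \<alpha> $$ (0, c)"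
      using \<alpha> Q\<alpha>_carrier that by (simp add: scalar_prod_def)
    also have "Q\<alpha> $$ (r, 0) = transpose_mat (cnj_mat q \<alpha>) $$ (m - 1 - r, 0)"
      unfolding Q\<alpha>_def using index_Qmat_mult[OF cnj\<alpha>T that(1)] by simp
    also have "\<dots> = cnj q (\<alpha> $$ (0, m - 1 - r))"
      using carrier_matD[OF \<alpha>] that by simp
    finally show ?thesis
      using \<alpha> Q\<alpha>_carrier that by simp
  qed
  have "P + flipF m (cnj_mat q P) \<in> carrier_mat m m" "- (Q\<alpha> * \<alpha>) \<in> carrier_mat m m"
    using P \<alpha> Q\<alpha>_carrier by auto
  then have "alpha_csp q m \<alpha> P \<longleftrightarrow>
      (\<forall>r<m. \<forall>c<m. (P + flipF m (cnj_mat q P)) $$ (r, c) = (- (Q\<alpha> * \<alpha>)) $$ (r, c))"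
    unfolding alpha_csp_def Q\<alpha>_def[symmetric] by (rule eq_carrier_mat_iff)
  also have "\<dots> \<longleftrightarrow> ?rhs"
    by (simp add: lhs rhs del: index_add_mat index_uminus_mat)
  finally show ?thesis .
qed

definition unit_row :: "nat \<Rightarrow> nat \<Rightarrow> 'a::field mat" where
  "unit_row m j = mat 1 m (\<lambda>(_, c). if c = j then 1 else 0)"

definition single_entry_mat :: "nat \<Rightarrow> nat \<Rightarrow> nat \<Rightarrow> 'a::field \<Rightarrow> 'a mat" where
  "single_entry_mat m r c t = mat m m (\<lambda>(i, k). if i = r \<and> k = c then t else 0)"

definition test_mat :: "nat \<Rightarrow> nat \<Rightarrow> 'a::field \<Rightarrow> nat \<Rightarrow> 'a mat" where
  "test_mat q m t j = Xmat q m (single_entry_mat m (m - 1 - j) j t) (unit_row m j)"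

lemma alpha_csp_unit_row:
  assumes "q > 0" and "j < m" and "t + t ^ q = -1"
  shows "alpha_csp q m (unit_row m j) (single_entry_mat m (m - 1 - j) j t)"
  using assms by (subst alpha_csp_iff) (auto simp: unit_row_def single_entry_mat_def cnj_def zero_power)

lemma index_test_mat:
  assumes "q > 0" and "j < m" and "i < 2 * m + 1" and "k < 2 * m + 1"
  shows "test_mat q m t j $$ (i, k)
       = (if i = k then 1 else 0) + (if i = m \<and> k = j then 1 else 0)
         + (if i = 2 * m - j \<and> k = j then t else 0) - (if i = 2 * m - j \<and> k = m then 1 else 0)"
proof -
  have "(Qmat m * transpose_mat (cnj_mat q (unit_row m j))) $$ (i - (m + 1), 0)
          = (if i = 2 * m - j then 1 else 0)" if "m < i"
  proof -
    have "transpose_mat (cnj_mat q (unit_row m j)) \<in> carrier_mat m 1"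
      by (intro carrier_matI) (simp_all add: unit_row_def)
    moreover have "i - (m + 1) < m"
      using that assms by simp
    ultimately have "(Qmat m * transpose_mat (cnj_mat q (unit_row m j))) $$ (i - (m + 1), 0)
        = transpose_mat (cnj_mat q (unit_row m j)) $$ (m - 1 - (i - (m + 1)), 0)"
      by (rule index_Qmat_mult) simp
    then show ?thesis
      using that assms by (auto simp: unit_row_def cnj_def)
  qed
  then show ?thesis
    using assms by (auto simp: test_mat_def Xmat_def unit_row_def single_entry_mat_def)
qed

lemma commute_test_mat_zeros:
  fixes g :: "'a::field mat"
  assumes "q > 0" and j: "j < m" and g: "g \<in> carrier_mat (2 * m + 1) (2 * m + 1)"
    and comm: "g * test_mat q m t j = test_mat q m t j * g"
  shows "\<And>a. a < 2 * m + 1 \<Longrightarrow> a \<noteq> m \<Longrightarrow> a \<noteq> 2 * m - j \<Longrightarrow> g $$ (a, 2 * m - j) = 0"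
    and "\<And>a. a < 2 * m + 1 \<Longrightarrow> a \<noteq> m \<Longrightarrow> a \<noteq> 2 * m - j \<Longrightarrow> g $$ (a, m) = 0"
    and "\<And>b. b < 2 * m + 1 \<Longrightarrow> b \<noteq> j \<Longrightarrow> b \<noteq> m \<Longrightarrow> g $$ (j, b) = 0"
    and "\<And>b. b < 2 * m + 1 \<Longrightarrow> b \<noteq> j \<Longrightarrow> b \<noteq> m \<Longrightarrow> g $$ (m, b) = 0"
proof -
  define n where "n = 2 * m + 1"
  define J where "J = 2 * m - j"
  define X where "X = test_mat q m t j"
  have idx: "J < n" "m < J" "j < n" "m < n"
    using j unfolding J_def n_def by auto
  have g_n: "g \<in> carrier_mat n n"
    using g unfolding n_def .
  have X: "X \<in> carrier_mat n n"
    unfolding X_def test_mat_def Xmat_def n_def by simp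
  have X_entry: "X $$ (i, k) = (if i = k then 1 else 0) + (if i = m \<and> k = j then 1 else 0)
      + (if i = J \<and> k = j then t else 0) - (if i = J \<and> k = m then 1 else 0)" if "i < n" "k < n" for i k
    unfolding X_def J_def by (rule index_test_mat) (use assms(1) j that n_def in auto)
  have gX: "(g * X) $$ (a, b) = g $$ (a, b) * 1 + g $$ (a, m) * (if b = j then 1 else 0)
      + g $$ (a, J) * (if b = j then t else 0) - g $$ (a, J) * (if b = m then 1 else 0)"
    if "a < n" "b < n" for a b
  proof -
    have "(g * X) $$ (a, b) = (\<Sum>k = 0..<n. g $$ (a, k) * X $$ (k, b))"
      using g_n X that by (simp add: scalar_prod_def)
    also have "\<dots> = (\<Sum>k = 0..<n. g $$ (a, k) * ((if k = b then 1 else 0)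
        + (if k = m then if b = j then 1 else 0 else 0) + (if k = J then if b = j then t else 0 else 0)
        - (if k = J then if b = m then 1 else 0 else 0)))"
      by (rule sum.cong) (use that in \<open>auto simp: X_entry\<close>)
    also have "\<dots> = g $$ (a, b) * 1 + g $$ (a, m) * (if b = j then 1 else 0)
        + g $$ (a, J) * (if b = j then t else 0) - g $$ (a, J) * (if b = m then 1 else 0)"
      unfolding distrib_left right_diff_distrib sum.distrib sum_subtractf
      using that idx by (simp add: sum_mult_indicator)
    finally show ?thesis .
  qed
  have Xg: "(X * g) $$ (a, b) = g $$ (a, b) * 1 + g $$ (j, b) * (if a = m then 1 else 0)
      + g $$ (j, b) * (if a = J then t else 0) - g $$ (m, b) * (if a = J then 1 else 0)"
    if "a < n" "b < n" for a b
  proof -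
    have "(X * g) $$ (a, b) = (\<Sum>k = 0..<n. g $$ (k, b) * X $$ (a, k))"
      using g_n X that by (simp add: scalar_prod_def mult.commute)
    also have "\<dots> = (\<Sum>k = 0..<n. g $$ (k, b) * ((if k = a then 1 else 0)
        + (if k = j then if a = m then 1 else 0 else 0) + (if k = j then if a = J then t else 0 else 0)
        - (if k = m then if a = J then 1 else 0 else 0)))"
      by (rule sum.cong) (use that in \<open>auto simp: X_entry\<close>)
    also have "\<dots> = g $$ (a, b) * 1 + g $$ (j, b) * (if a = m then 1 else 0)
        + g $$ (j, b) * (if a = J then t else 0) - g $$ (m, b) * (if a = J then 1 else 0)"
      unfolding distrib_left right_diff_distrib sum.distrib sum_subtractf
      using that idx by (simp add: sum_mult_indicator)
    finally show ?thesis .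
  qed
  have entry_eq: "(g * X) $$ (a, b) = (X * g) $$ (a, b)" for a b
    using comm unfolding X_def by simp
  have col_J: "g $$ (a, J) = 0" if "a < n" "a \<noteq> m" "a \<noteq> J" for a
    using entry_eq[of a m] gX[of a m] Xg[of a m] that idx j by simp
  have col_m: "g $$ (a, m) = 0" if "a < n" "a \<noteq> m" "a \<noteq> J" for a
    using entry_eq[of a j] gX[of a j] Xg[of a j] that idx j col_J[OF that] by simp
  have row_j: "g $$ (j, b) = 0" if "b < n" "b \<noteq> j" "b \<noteq> m" for b
    using entry_eq[of m b] gX[of m b] Xg[of m b] that idx j by simp
  have row_m: "g $$ (m, b) = 0" if "b < n" "b \<noteq> j" "b \<noteq> m" for b
    using entry_eq[of J b] gX[of J b] Xg[of J b] that idx j row_j[OF that] by simp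
  show "\<And>a. a < 2 * m + 1 \<Longrightarrow> a \<noteq> m \<Longrightarrow> a \<noteq> 2 * m - j \<Longrightarrow> g $$ (a, 2 * m - j) = 0"
    and "\<And>a. a < 2 * m + 1 \<Longrightarrow> a \<noteq> m \<Longrightarrow> a \<noteq> 2 * m - j \<Longrightarrow> g $$ (a, m) = 0"
    and "\<And>b. b < 2 * m + 1 \<Longrightarrow> b \<noteq> j \<Longrightarrow> b \<noteq> m \<Longrightarrow> g $$ (j, b) = 0"
    and "\<And>b. b < 2 * m + 1 \<Longrightarrow> b \<noteq> j \<Longrightarrow> b \<noteq> m \<Longrightarrow> g $$ (m, b) = 0"
    using col_J col_m row_j row_m unfolding n_def J_def by blast+
qed

lemma index_Xmat_zero:
  assumes "q > 0" and "i < 2 * m + 1" and "k < 2 * m + 1"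
  shows "Xmat q m P (0\<^sub>m 1 m) $$ (i, k)
       = (if m < i \<and> k < m then P $$ (i - (m + 1), k) else if i = k then 1 else 0)"
proof -
  have "(Qmat m * transpose_mat (cnj_mat q (0\<^sub>m 1 m :: 'a mat))) $$ (i - (m + 1), 0) = 0" if "m < i"
  proof -
    have "transpose_mat (cnj_mat q (0\<^sub>m 1 m :: 'a mat)) \<in> carrier_mat m 1"
      by (intro carrier_matI) simp_all
    moreover have "i - (m + 1) < m"
      using that assms by simp
    ultimately have "(Qmat m * transpose_mat (cnj_mat q (0\<^sub>m 1 m :: 'a mat))) $$ (i - (m + 1), 0)
        = transpose_mat (cnj_mat q (0\<^sub>m 1 m :: 'a mat)) $$ (m - 1 - (i - (m + 1)), 0)"
      by (rule index_Qmat_mult) simp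
    then show ?thesis
      using that assms by (simp add: cnj_def zero_power)
  qed
  then show ?thesis
    using assms by (auto simp: Xmat_def)
qed

lemma index_unitary_form:
  assumes X: "X \<in> carrier_mat n n" and "a < n" and "c < n"
  shows "(transpose_mat (cnj_mat q X) * Qmat n * X) $$ (a, c)
       = (\<Sum>k = 0..<n. cnj q (X $$ (n - 1 - k, a)) * X $$ (k, c))"
proof -
  define XQ where "XQ = transpose_mat (cnj_mat q X) * Qmat n"
  have XH: "transpose_mat (cnj_mat q X) \<in> carrier_mat n n"
    using carrier_matD[OF X] by (intro carrier_matI) simp_all
  have XQ_entry: "XQ $$ (a, k) = cnj q (X $$ (n - 1 - k, a))" if "k < n" for k
    unfolding XQ_def using index_mult_Qmat[OF XH assms(2) that] X assms(2) that by simp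
  have "(XQ * X) $$ (a, c) = row XQ a \<bullet> col X c"
    using X assms(2,3) unfolding XQ_def by (intro index_mult_mat(1)) auto
  also have "\<dots> = (\<Sum>k = 0..<n. XQ $$ (a, k) * X $$ (k, c))"
    unfolding scalar_prod_def using X assms(2,3) unfolding XQ_def by (intro sum.cong) auto
  also have "\<dots> = (\<Sum>k = 0..<n. cnj q (X $$ (n - 1 - k, a)) * X $$ (k, c))"
    using XQ_entry by (intro sum.cong) simp_all
  finally show ?thesis
    unfolding XQ_def .
qed

lemma alpha_csp_zero_if_unitary:
  assumes q: "q > 0" and P: "P \<in> carrier_mat m m"
    and unitary: "transpose_mat (cnj_mat q (Xmat q m P (0\<^sub>m 1 m))) * Qmat (2 * m + 1) * Xmat q m P (0\<^sub>m 1 m)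
                  = Qmat (2 * m + 1)"
  shows "alpha_csp q m (0\<^sub>m 1 m) P"
proof -
  define n where "n = 2 * m + 1"
  define X where "X = Xmat q m P (0\<^sub>m 1 m)"
  have X: "X \<in> carrier_mat n n"
    unfolding X_def Xmat_def n_def by simp
  have X_entry: "X $$ (i, k) = (if m < i \<and> k < m then P $$ (i - (m + 1), k) else if i = k then 1 else 0)"
    if "i < n" "k < n" for i k
    unfolding X_def by (rule index_Xmat_zero[OF q]) (use that n_def in auto)
  have "P $$ (r, c) + cnj q (P $$ (m - 1 - c, m - 1 - r)) = 0" if rc: "r < m" "c < m" for r c
  proof -
    define a where "a = m - 1 - r"
    have a: "a < m" "n - 1 - a = m + 1 + r"
      using rc unfolding a_def n_def by auto
    have summand: "cnj q (X $$ (n - 1 - k, a)) * X $$ (k, c)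
        = (if k = c then cnj q (P $$ (m - 1 - c, a)) else 0) + (if k = n - 1 - a then P $$ (r, c) else 0)"
      if "k < n" for k
    proof -
      consider "k < m" | "k = m" | "m < k" by linarith
      then show ?thesis
        using that a rc q X_entry unfolding n_def by cases (auto simp: cnj_def zero_power)
    qed
    have "0 = Qmat n $$ (a, c)"
      using a rc unfolding n_def Qmat_def by simp
    also have "\<dots> = (transpose_mat (cnj_mat q X) * Qmat n * X) $$ (a, c)"
      using unitary unfolding X_def n_def by simp
    also have "\<dots> = (\<Sum>k = 0..<n. cnj q (X $$ (n - 1 - k, a)) * X $$ (k, c))"
      using a rc unfolding n_def by (intro index_unitary_form[OF X[unfolded n_def]]) auto
    also have "\<dots> = (\<Sum>k = 0..<n. (if k = c then cnj q (P $$ (m - 1 - c, a)) else 0)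
                                  + (if k = n - 1 - a then P $$ (r, c) else 0))"
      by (rule sum.cong[OF refl summand]) simp
    also have "\<dots> = cnj q (P $$ (m - 1 - c, a)) + P $$ (r, c)"
      using a rc n_def by (simp add: sum.distrib)
    finally show ?thesis
      unfolding a_def by (simp add: add.commute)
  qed
  then show ?thesis
    using alpha_csp_iff[OF P] q by (simp add: cnj_def zero_power)
qed

text \<open>This is where \<open>m \<ge> 2\<close> is used: every index is avoided by the \<open>j\<close> of some test element.\<close>
lemma eq_Xmat_zero_if_commutes_test_mats:
  fixes g :: "'a::field mat"
  assumes q: "q > 0" and m: "m \<ge> 2" and g: "g \<in> carrier_mat (2 * m + 1) (2 * m + 1)"
    and lower: "lower_unitriangular g"
    and comm: "\<And>j. j < m \<Longrightarrow> g * test_mat q m t j = test_mat q m t j * g"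
  shows "g = Xmat q m (mat m m (\<lambda>(r, c). g $$ (m + 1 + r, c))) (0\<^sub>m 1 m)"
proof -
  define n where "n = 2 * m + 1"
  note zeros = commute_test_mat_zeros[OF q _ g comm]
  have diag: "g $$ (i, i) = 1" if "i < n" for i
    using lower g that unfolding lower_unitriangular_def n_def by auto
  have upper: "g $$ (i, k) = 0" if "i < k" "k < n" for i k
    using lower g that unfolding lower_unitriangular_def n_def by auto
  have top_rows: "g $$ (i, b) = 0" if "i < m" "b < n" "b \<noteq> i" for i b
    using upper[of i b] zeros(3)[of i b] that unfolding n_def by (cases "b = m") auto
  have middle_row: "g $$ (m, b) = 0" if "b < n" "b \<noteq> m" for b
  proof (cases "m < b")
    case False
    have "(if b = 0 then 1 else 0) < m" "(if b = 0 then 1 else 0) \<noteq> b"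
      using m by auto
    then show ?thesis
      using zeros(4)[of "if b = 0 then 1 else 0" b] that unfolding n_def by simp
  qed (use upper that n_def in auto)
  have middle_col: "g $$ (a, m) = 0" if "a < n" "a \<noteq> m" for a
  proof (cases "a < m")
    case False
    have "(if a = 2 * m then 1 else 0) < m" "2 * m - (if a = 2 * m then 1 else 0) \<noteq> a"
      using m False by auto
    then show ?thesis
      using zeros(2)[of "if a = 2 * m then 1 else 0" a] that False unfolding n_def by simp
  qed (use upper that n_def in auto)
  have right_cols: "g $$ (a, k) = 0" if "m < k" "k < n" "a < n" "a \<noteq> k" for a k
  proof (cases "a = m")
    case False
    have "2 * m - (2 * m - k) = k" "2 * m - k < m"
      using that unfolding n_def by auto
    then show ?thesis
      using zeros(1)[of "2 * m - k" a] that False unfolding n_def by simp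
  qed (use upper that n_def in auto)
  show ?thesis
  proof (rule eq_matI)
    fix i k
    assume "i < dim_row (Xmat q m (mat m m (\<lambda>(r, c). g $$ (m + 1 + r, c))) (0\<^sub>m 1 m))"
      and "k < dim_col (Xmat q m (mat m m (\<lambda>(r, c). g $$ (m + 1 + r, c))) (0\<^sub>m 1 m))"
    then have ik: "i < n" "k < n"
      by (simp_all add: Xmat_def n_def)
    have "g $$ (i, k) = (if m < i \<and> k < m then g $$ (i, k) else if i = k then 1 else 0)"
    proof -
      consider "i < m" | "i = m" | "m < i \<and> m \<le> k" | "m < i \<and> k < m"
        by linarith
      then show ?thesis
        using top_rows[of i k] middle_row[of k] middle_col[of i] right_cols[of k i] diag[of i] ik
        by cases (auto simp: le_less)
    qed
    then show "g $$ (i, k) = Xmat q m (mat m m (\<lambda>(r, c). g $$ (m + 1 + r, c))) (0\<^sub>m 1 m) $$ (i, k)"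
      using ik diag[of i] unfolding index_Xmat_zero[OF q ik[unfolded n_def]] n_def by auto
  qed (use g in \<open>simp_all add: Xmat_def\<close>)
qed

theorem theorem3p8:
  fixes p q k m :: nat
  assumes "prime p" and "k \<ge> 1" and "q = p ^ k"
    and "card (UNIV :: 'a::{finite,field} set) = q ^ 2"
    and "m \<ge> 2"
  shows "centralizer (sylowS q m) (setA q m :: 'a mat set) \<subseteq> setA0 q m"
proof
  fix g :: "'a mat"
  assume "g \<in> centralizer (sylowS q m) (setA q m)"
  then have g: "g \<in> carrier_mat (2 * m + 1) (2 * m + 1)" and lower: "lower_unitriangular g"
    and unitary: "transpose_mat (cnj_mat q g) * Qmat (2 * m + 1) * g = Qmat (2 * m + 1)"
    and comm: "\<And>h. h \<in> setA q m \<Longrightarrow> g * h = h * g"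
    unfolding centralizer_def sylowS_def unitary_group_def by auto
  have q: "q > 0"
    using assms(1,3) by (simp add: prime_gt_0_nat)
  obtain t :: 'a where t: "t + t ^ q = -1"
    using exists_add_power_eq_minus_one[OF assms(1-4)] by blast
  have "test_mat q m t j \<in> setA q m" if "j < m" for j
  proof -
    have "single_entry_mat m (m - 1 - j) j t \<in> carrier_mat m m" "(unit_row m j :: 'a mat) \<in> carrier_mat 1 m"
      by (simp_all add: single_entry_mat_def unit_row_def)
    then show ?thesis
      using alpha_csp_unit_row[OF q that t] unfolding setA_def test_mat_def by blast
  qed
  then have g_eq: "g = Xmat q m (mat m m (\<lambda>(r, c). g $$ (m + 1 + r, c))) (0\<^sub>m 1 m)"
    using eq_Xmat_zero_if_commutes_test_mats[OF q assms(5) g lower] comm by blast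
  then have "alpha_csp q m (0\<^sub>m 1 m) (mat m m (\<lambda>(r, c). g $$ (m + 1 + r, c)))"
    using alpha_csp_zero_if_unitary[OF q] unitary by (metis mat_carrier)
  then show "g \<in> setA0 q m"
    unfolding setA0_def using g_eq by auto
qed

end
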